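(* Let $L\subseteq Q$ be a dense extension of symmetric Leibniz algebras, and suppose $Q$ is a multiplicatively prime algebra of quotients of $L$. Then $I\subseteq Q$ is a dense extension for every nonzero ideal $I$ of $L$.
   Context: A symmetric Leibniz algebra satisfies both $[x,[y,z]]=[[x,y],z]-[[x,z],y]$ and $[x,[y,z]]=[[x,y],z]+[y,[x,z]]$. For $x\in Q$, $R_x(u)=[u,x]$, $L_x(u)=[x,u]$; $M(Q)$ is the associative subalgebra of $\mathrm{End}(Q)$ generated by the identity and all $R_x,L_x$. A subalgebra $K$ of $Q$ is dense ($K\subseteq Q$ is a dense extension) if the only $\mu\in M(Q)$ with $\mu(K)=\{0\}$ is $\mu=0$. A Leibniz algebra is prime if $[I,J]\ne\{0\}$ for all nonzero ideals $I,J$; an associative algebra is prime if the product of any two nonzero two-sided ideals is nonzero. $Q$ is multiplicatively prime if $Q$ and $M(Q)$ are prime. With $\mathscr{A}_Q(L)$ the associative algebra generated by $R_x,L_y$ ($x,y\in L$), ${}_L(q)=\mathbb{F}q+\{\sum\xi_i(q):\xi_i\in\mathscr{A}_Q(L)\}$, $(L:q)=\{x\in L:[x,{}_L(q)]\subseteq L,[{}_L(q),x]\subseteq L\}$; $Q$ is an algebra of quotients of $L$ if for all $p,q\in Q$, $p\ne0$, there is $x\in(L:q)$ with $[x,p]\ne0$ or $y\in(L:q)$ with $[p,y]\ne0$. *)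

theory Defs
  imports Complex_Main
begin

text \<open>A (symmetric Leibniz) algebra is modelled on a type 'q, which plays the role of Q,
 with scalar multiplication sm by a field 'k and a bracket br.  Subsets of 'q model
 subalgebras / ideals of Q.\<close>

definition sym_leibniz :: "('k::field \<Rightarrow> 'q::ab_group_add \<Rightarrow> 'q) \<Rightarrow> ('q \<Rightarrow> 'q \<Rightarrow> 'q) \<Rightarrow> bool" where
  "sym_leibniz sm br \<longleftrightarrow>
     Vector_Spaces.vector_space sm \<and>
     (\<forall>x y z. br (x + y) z = br x z + br y z) \<and>
     (\<forall>x y z. br x (y + z) = br x y + br x z) \<and>
     (\<forall>a x y. br (sm a x) y = sm a (br x y)) \<and>
     (\<forall>a x y. br x (sm a y) = sm a (br x y)) \<and>
     (\<forall>x y z. br x (br y z) = br (br x y) z - br (br x z) y) \<and>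
     (\<forall>x y z. br x (br y z) = br (br x y) z + br y (br x z))"

definition subalgebra :: "('k::field \<Rightarrow> 'q::ab_group_add \<Rightarrow> 'q) \<Rightarrow> ('q \<Rightarrow> 'q \<Rightarrow> 'q) \<Rightarrow> 'q set \<Rightarrow> bool" where
  "subalgebra sm br K \<longleftrightarrow> Modules.module.subspace sm K \<and> (\<forall>x\<in>K. \<forall>y\<in>K. br x y \<in> K)"

definition ideal_of :: "('k::field \<Rightarrow> 'q::ab_group_add \<Rightarrow> 'q) \<Rightarrow> ('q \<Rightarrow> 'q \<Rightarrow> 'q) \<Rightarrow> 'q set \<Rightarrow> 'q set \<Rightarrow> bool" where
  "ideal_of sm br L I \<longleftrightarrow> Modules.module.subspace sm I \<and> I \<subseteq> L \<and>
     (\<forall>x\<in>L. \<forall>i\<in>I. br x i \<in> I \<and> br i x \<in> I)"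

text \<open>M(Q): associative subalgebra of End(Q) generated by the identity and all R_x, L_x.\<close>
inductive_set multalg :: "('k::field \<Rightarrow> 'q::ab_group_add \<Rightarrow> 'q) \<Rightarrow> ('q \<Rightarrow> 'q \<Rightarrow> 'q) \<Rightarrow> ('q \<Rightarrow> 'q) set"
  for sm br where
  M_id: "id \<in> multalg sm br"
| M_R: "(\<lambda>u. br u x) \<in> multalg sm br"
| M_L: "(\<lambda>u. br x u) \<in> multalg sm br"
| M_add: "f \<in> multalg sm br \<Longrightarrow> g \<in> multalg sm br \<Longrightarrow> (\<lambda>u. f u + g u) \<in> multalg sm br"
| M_smult: "f \<in> multalg sm br \<Longrightarrow> (\<lambda>u. sm a (f u)) \<in> multalg sm br"
| M_comp: "f \<in> multalg sm br \<Longrightarrow> g \<in> multalg sm br \<Longrightarrow> f \<circ> g \<in> multalg sm br"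

inductive_set assoc_L :: "('k::field \<Rightarrow> 'q::ab_group_add \<Rightarrow> 'q) \<Rightarrow> ('q \<Rightarrow> 'q \<Rightarrow> 'q) \<Rightarrow> 'q set \<Rightarrow> ('q \<Rightarrow> 'q) set"
  for sm br L where
  A_R: "x \<in> L \<Longrightarrow> (\<lambda>u. br u x) \<in> assoc_L sm br L"
| A_L: "x \<in> L \<Longrightarrow> (\<lambda>u. br x u) \<in> assoc_L sm br L"
| A_add: "f \<in> assoc_L sm br L \<Longrightarrow> g \<in> assoc_L sm br L \<Longrightarrow> (\<lambda>u. f u + g u) \<in> assoc_L sm br L"
| A_smult: "f \<in> assoc_L sm br L \<Longrightarrow> (\<lambda>u. sm a (f u)) \<in> assoc_L sm br L"
| A_comp: "f \<in> assoc_L sm br L \<Longrightarrow> g \<in> assoc_L sm br L \<Longrightarrow> f \<circ> g \<in> assoc_L sm br L"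

definition dense_ext :: "('k::field \<Rightarrow> 'q::ab_group_add \<Rightarrow> 'q) \<Rightarrow> ('q \<Rightarrow> 'q \<Rightarrow> 'q) \<Rightarrow> 'q set \<Rightarrow> bool" where
  "dense_ext sm br K \<longleftrightarrow> (\<forall>\<mu>\<in>multalg sm br. (\<forall>k\<in>K. \<mu> k = 0) \<longrightarrow> \<mu> = (\<lambda>u. 0))"

definition prime_leibniz :: "('k::field \<Rightarrow> 'q::ab_group_add \<Rightarrow> 'q) \<Rightarrow> ('q \<Rightarrow> 'q \<Rightarrow> 'q) \<Rightarrow> bool" where
  "prime_leibniz sm br \<longleftrightarrow> (\<forall>I J. ideal_of sm br UNIV I \<and> I \<noteq> {0} \<and> ideal_of sm br UNIV J \<and> J \<noteq> {0}
       \<longrightarrow> (\<exists>i\<in>I. \<exists>j\<in>J. br i j \<noteq> 0))"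

definition mult_ideal :: "('k::field \<Rightarrow> 'q::ab_group_add \<Rightarrow> 'q) \<Rightarrow> ('q \<Rightarrow> 'q \<Rightarrow> 'q) \<Rightarrow> ('q \<Rightarrow> 'q) set \<Rightarrow> bool" where
  "mult_ideal sm br J \<longleftrightarrow> J \<subseteq> multalg sm br \<and> (\<lambda>u. 0) \<in> J \<and>
     (\<forall>f\<in>J. \<forall>g\<in>J. (\<lambda>u. f u + g u) \<in> J) \<and> (\<forall>f\<in>J. \<forall>a. (\<lambda>u. sm a (f u)) \<in> J) \<and>
     (\<forall>f\<in>J. \<forall>m\<in>multalg sm br. m \<circ> f \<in> J \<and> f \<circ> m \<in> J)"

definition prime_multalg :: "('k::field \<Rightarrow> 'q::ab_group_add \<Rightarrow> 'q) \<Rightarrow> ('q \<Rightarrow> 'q \<Rightarrow> 'q) \<Rightarrow> bool" where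
  "prime_multalg sm br \<longleftrightarrow> (\<forall>I J. mult_ideal sm br I \<and> I \<noteq> {\<lambda>u. 0} \<and> mult_ideal sm br J \<and> J \<noteq> {\<lambda>u. 0}
       \<longrightarrow> (\<exists>f\<in>I. \<exists>g\<in>J. f \<circ> g \<noteq> (\<lambda>u. 0)))"

definition mult_prime :: "('k::field \<Rightarrow> 'q::ab_group_add \<Rightarrow> 'q) \<Rightarrow> ('q \<Rightarrow> 'q \<Rightarrow> 'q) \<Rightarrow> bool" where
  "mult_prime sm br \<longleftrightarrow> prime_leibniz sm br \<and> prime_multalg sm br"

definition gen_L :: "('k::field \<Rightarrow> 'q::ab_group_add \<Rightarrow> 'q) \<Rightarrow> ('q \<Rightarrow> 'q \<Rightarrow> 'q) \<Rightarrow> 'q set \<Rightarrow> 'q \<Rightarrow> 'q set" where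
  "gen_L sm br L q = {sm a q + sum (\<lambda>f. f q) F | a F. finite F \<and> F \<subseteq> assoc_L sm br L}"

definition colon_L :: "('k::field \<Rightarrow> 'q::ab_group_add \<Rightarrow> 'q) \<Rightarrow> ('q \<Rightarrow> 'q \<Rightarrow> 'q) \<Rightarrow> 'q set \<Rightarrow> 'q \<Rightarrow> 'q set" where
  "colon_L sm br L q = {x \<in> L. \<forall>y\<in>gen_L sm br L q. br x y \<in> L \<and> br y x \<in> L}"

definition algebra_of_quotients :: "('k::field \<Rightarrow> 'q::ab_group_add \<Rightarrow> 'q) \<Rightarrow> ('q \<Rightarrow> 'q \<Rightarrow> 'q) \<Rightarrow> 'q set \<Rightarrow> bool" where
  "algebra_of_quotients sm br L \<longleftrightarrow> (\<forall>p q. p \<noteq> 0 \<longrightarrow>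
     (\<exists>x\<in>colon_L sm br L q. br x p \<noteq> 0) \<or> (\<exists>y\<in>colon_L sm br L q. br p y \<noteq> 0))"

end

theory Submission
  imports Defs
begin

text \<open>Let \<open>\<nu> \<in> M(Q)\<close> vanish on \<open>I\<close>. For \<open>i \<in> I\<close> the operators \<open>\<nu> L\<^sub>i\<close> and \<open>\<nu> R\<^sub>i\<close>
  vanish on \<open>L\<close>, because \<open>[i,L] + [L,i] \<subseteq> I\<close>; by density of \<open>L\<close> they are zero, and
  inductively \<open>\<nu>\<close> vanishes on \<open>M(Q) I\<close>. Hence \<open>J = {q. \<nu> (M(Q) q) = 0}\<close> is a nonzero ideal
  of \<open>Q\<close>, and primeness of \<open>Q\<close> makes the ideal \<open>T\<close> of operators in \<open>M(Q)\<close> with range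
  in \<open>J\<close> nonzero (it contains some \<open>L\<^sub>i\<close> with \<open>[i,J] \<noteq> 0\<close>). Since \<open>\<nu> T = 0\<close>, primeness of
  \<open>M(Q)\<close> gives \<open>\<nu> = 0\<close>.

  Only bilinearity of the bracket is used: neither the Leibniz identities, nor that \<open>L\<close> is a
  subalgebra, nor that \<open>Q\<close> is an algebra of quotients of \<open>L\<close> enters the argument.\<close>

definition kernel_core :: "('k::field \<Rightarrow> 'q::ab_group_add \<Rightarrow> 'q) \<Rightarrow> ('q \<Rightarrow> 'q \<Rightarrow> 'q) \<Rightarrow> ('q \<Rightarrow> 'q) \<Rightarrow> 'q set" where
  "kernel_core sm br \<nu> = {q. \<forall>b\<in>multalg sm br. \<nu> (b q) = 0}"

definition multalg_into :: "('k::field \<Rightarrow> 'q::ab_group_add \<Rightarrow> 'q) \<Rightarrow> ('q \<Rightarrow> 'q \<Rightarrow> 'q) \<Rightarrow> 'q set \<Rightarrow> ('q \<Rightarrow> 'q) set" where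
  "multalg_into sm br J = {\<tau> \<in> multalg sm br. \<forall>u. \<tau> u \<in> J}"

locale bilinear_algebra = module sm
  for sm :: "'k::field \<Rightarrow> 'q::ab_group_add \<Rightarrow> 'q" +
  fixes br :: "'q \<Rightarrow> 'q \<Rightarrow> 'q"
  assumes br_add_left: "br (x + y) z = br x z + br y z"
    and br_add_right: "br x (y + z) = br x y + br x z"
    and br_scale_left: "br (sm a x) y = sm a (br x y)"
    and br_scale_right: "br x (sm a y) = sm a (br x y)"

lemma sym_leibniz_bilinear_algebra: "sym_leibniz sm br \<Longrightarrow> bilinear_algebra sm br"
  unfolding sym_leibniz_def bilinear_algebra_def bilinear_algebra_axioms_def
  by (simp add: module_iff_vector_space)

context bilinear_algebra
begin

lemma multalg_linear:
  assumes "\<mu> \<in> multalg sm br"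
  shows "(\<forall>x y. \<mu> (x + y) = \<mu> x + \<mu> y) \<and> (\<forall>a x. \<mu> (sm a x) = sm a (\<mu> x))"
  using assms
  by induction (simp_all add: br_add_left br_add_right br_scale_left br_scale_right
      scale_right_distrib mult.commute)

lemma multalg_add: "\<mu> \<in> multalg sm br \<Longrightarrow> \<mu> (x + y) = \<mu> x + \<mu> y"
  using multalg_linear by blast

lemma multalg_scale: "\<mu> \<in> multalg sm br \<Longrightarrow> \<mu> (sm a x) = sm a (\<mu> x)"
  using multalg_linear by blast

lemma multalg_zero: "\<mu> \<in> multalg sm br \<Longrightarrow> \<mu> 0 = 0"
  using multalg_add[of \<mu> 0 0] by simp

lemma zero_in_multalg: "(\<lambda>u. 0) \<in> multalg sm br"
proof -
  have "(\<lambda>u. sm 0 (id u)) \<in> multalg sm br"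
    by (rule multalg.M_smult[OF multalg.M_id])
  then show ?thesis by simp
qed

lemma ideal_multalg_closed:
  assumes "ideal_of sm br UNIV J" and "b \<in> multalg sm br" and "q \<in> J"
  shows "b q \<in> J"
  using assms(2,3)
proof (induction arbitrary: q)
  case (M_add f g)
  then show ?case using assms(1) subspace_add unfolding ideal_of_def by auto
next
  case (M_smult f a)
  then show ?case using assms(1) subspace_scale unfolding ideal_of_def by auto
qed (use assms(1) in \<open>auto simp: ideal_of_def\<close>)

lemma dense_ext_annihilator_bracket:
  assumes "dense_ext sm br L" and "ideal_of sm br L I"
    and "\<nu> \<in> multalg sm br" and "\<forall>i\<in>I. \<nu> i = 0" and "i \<in> I"
  shows "\<nu> (br i x) = 0" and "\<nu> (br x i) = 0"
proof -
  have "\<nu> \<circ> (\<lambda>u. br i u) = (\<lambda>u. 0)" and "\<nu> \<circ> (\<lambda>u. br u i) = (\<lambda>u. 0)"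
    using assms multalg.M_comp[OF assms(3) multalg.M_L] multalg.M_comp[OF assms(3) multalg.M_R]
    unfolding dense_ext_def ideal_of_def by auto
  then show "\<nu> (br i x) = 0" and "\<nu> (br x i) = 0"
    by (metis comp_apply)+
qed

lemma dense_ext_annihilator_comp:
  assumes "dense_ext sm br L" and "ideal_of sm br L I" and "b \<in> multalg sm br"
    and "\<nu> \<in> multalg sm br" and "\<forall>i\<in>I. \<nu> i = 0" and "i \<in> I"
  shows "\<nu> (b i) = 0"
  using assms(3-)
proof (induction arbitrary: \<nu> i)
  case (M_R x)
  then show ?case using dense_ext_annihilator_bracket[OF assms(1,2)] by simp
next
  case (M_L x)
  then show ?case using dense_ext_annihilator_bracket[OF assms(1,2)] by simp
next
  case (M_add f g)
  show ?case
    using M_add.IH(1)[OF M_add.prems] M_add.IH(2)[OF M_add.prems]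
    by (simp add: multalg_add[OF M_add.prems(1)])
next
  case (M_smult f a)
  show ?case
    using M_smult.IH[OF M_smult.prems] by (simp add: multalg_scale[OF M_smult.prems(1)])
next
  case (M_comp f g)
  have "\<nu> \<circ> f \<in> multalg sm br"
    by (rule multalg.M_comp[OF M_comp.prems(1) M_comp.hyps(1)])
  moreover have "\<forall>i\<in>I. (\<nu> \<circ> f) i = 0"
    using M_comp.IH(1)[OF M_comp.prems(1,2)] by simp
  ultimately show ?case
    using M_comp.IH(2)[OF _ _ M_comp.prems(3)] by (metis comp_apply)
qed simp

lemma kernel_core_ideal:
  assumes "\<nu> \<in> multalg sm br"
  shows "ideal_of sm br UNIV (kernel_core sm br \<nu>)"
proof -
  have closed: "b q \<in> kernel_core sm br \<nu>"
    if "b \<in> multalg sm br" and "q \<in> kernel_core sm br \<nu>" for b q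
    using that multalg.M_comp unfolding kernel_core_def by fastforce
  have "subspace (kernel_core sm br \<nu>)"
    unfolding subspace_def kernel_core_def
    using assms by (simp add: multalg_zero multalg_add multalg_scale)
  then show ?thesis
    unfolding ideal_of_def using closed multalg.M_L multalg.M_R by blast
qed

lemma mult_ideal_multalg_into:
  assumes "ideal_of sm br UNIV J"
  shows "mult_ideal sm br (multalg_into sm br J)"
  unfolding mult_ideal_def
proof (intro conjI ballI allI)
  have J: "subspace J" using assms unfolding ideal_of_def by blast
  fix f g a m
  assume f: "f \<in> multalg_into sm br J"
  then show "(\<lambda>u. sm a (f u)) \<in> multalg_into sm br J"
    using J subspace_scale multalg.M_smult unfolding multalg_into_def by blast
  { assume "g \<in> multalg_into sm br J"
    with f show "(\<lambda>u. f u + g u) \<in> multalg_into sm br J"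
      using J subspace_add multalg.M_add unfolding multalg_into_def by blast }
  assume m: "m \<in> multalg sm br"
  with f show "m \<circ> f \<in> multalg_into sm br J" and "f \<circ> m \<in> multalg_into sm br J"
    using ideal_multalg_closed[OF assms] unfolding multalg_into_def by (auto intro: multalg.M_comp)
next
  show "(\<lambda>u. 0) \<in> multalg_into sm br J"
    using assms subspace_0 zero_in_multalg unfolding multalg_into_def ideal_of_def by auto
qed (auto simp: multalg_into_def)

lemma multalg_into_nonzero:
  assumes "prime_leibniz sm br" and "ideal_of sm br UNIV J" and "J \<noteq> {0}"
  shows "multalg_into sm br J \<noteq> {\<lambda>u. 0}"
proof -
  obtain i j where "i \<in> J" and "br i j \<noteq> 0"
    using assms unfolding prime_leibniz_def by blast
  moreover have "(\<lambda>u. br i u) \<in> multalg_into sm br J"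
    using \<open>i \<in> J\<close> assms(2) multalg.M_L unfolding multalg_into_def ideal_of_def by blast
  ultimately show ?thesis by (metis singletonD)
qed

lemma mult_ideal_left_annihilator:
  assumes "mult_ideal sm br T"
  shows "mult_ideal sm br {f \<in> multalg sm br. \<forall>\<tau>\<in>T. f \<circ> \<tau> = (\<lambda>u. 0)}"
    (is "mult_ideal sm br ?A")
  unfolding mult_ideal_def
proof (intro conjI ballI allI)
  fix f g a m
  assume f: "f \<in> ?A"
  then show "(\<lambda>u. sm a (f u)) \<in> ?A"
    using multalg.M_smult by (fastforce simp: fun_eq_iff)
  { assume "g \<in> ?A"
    with f show "(\<lambda>u. f u + g u) \<in> ?A"
      using multalg.M_add by (fastforce simp: fun_eq_iff) }
  assume m: "m \<in> multalg sm br"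
  with f show "m \<circ> f \<in> ?A"
    using multalg.M_comp by (fastforce simp: fun_eq_iff multalg_zero)
  have "m \<circ> \<tau> \<in> T" if "\<tau> \<in> T" for \<tau>
    using assms m that unfolding mult_ideal_def by blast
  with m f show "f \<circ> m \<in> ?A"
    by (auto intro: multalg.M_comp simp: comp_assoc)
qed (use zero_in_multalg in auto)

lemma prime_multalg_left_annihilator:
  assumes "prime_multalg sm br" and "mult_ideal sm br T" and "T \<noteq> {\<lambda>u. 0}"
    and "\<nu> \<in> multalg sm br" and "\<forall>\<tau>\<in>T. \<nu> \<circ> \<tau> = (\<lambda>u. 0)"
  shows "\<nu> = (\<lambda>u. 0)"
proof (rule ccontr)
  let ?A = "{f \<in> multalg sm br. \<forall>\<tau>\<in>T. f \<circ> \<tau> = (\<lambda>u. 0)}"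
  assume "\<nu> \<noteq> (\<lambda>u. 0)"
  then have "?A \<noteq> {\<lambda>u. 0}" using assms(4,5) by blast
  then show False
    using assms(1-3) mult_ideal_left_annihilator[OF assms(2)]
    unfolding prime_multalg_def by blast
qed

end

theorem corollary6p6:
  fixes sm :: "'k::field \<Rightarrow> 'q::ab_group_add \<Rightarrow> 'q" and br :: "'q \<Rightarrow> 'q \<Rightarrow> 'q"
    and L I :: "'q set"
  assumes "sym_leibniz sm br"
    and "subalgebra sm br L"
    and "dense_ext sm br L"
    and "mult_prime sm br"
    and "algebra_of_quotients sm br L"
    and "ideal_of sm br L I"
    and "I \<noteq> {0}"
  shows "dense_ext sm br I"
  unfolding dense_ext_def
proof (intro ballI impI)
  interpret bilinear_algebra sm br
    using assms(1) by (rule sym_leibniz_bilinear_algebra)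
  fix \<nu> assume \<nu>: "\<nu> \<in> multalg sm br" and \<nu>_I: "\<forall>i\<in>I. \<nu> i = 0"
  let ?J = "kernel_core sm br \<nu>"
  have J_ideal: "ideal_of sm br UNIV ?J" using \<nu> by (rule kernel_core_ideal)
  have "I \<subseteq> ?J"
    using dense_ext_annihilator_comp[OF assms(3,6) _ \<nu> \<nu>_I] unfolding kernel_core_def by blast
  moreover have "0 \<in> I" using assms(6) subspace_0 unfolding ideal_of_def by blast
  ultimately have "?J \<noteq> {0}" using assms(7) by blast
  then have "multalg_into sm br ?J \<noteq> {\<lambda>u. 0}"
    using assms(4) J_ideal multalg_into_nonzero unfolding mult_prime_def by blast
  moreover have "\<forall>\<tau>\<in>multalg_into sm br ?J. \<nu> \<circ> \<tau> = (\<lambda>u. 0)"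
    using multalg.M_id unfolding multalg_into_def kernel_core_def by fastforce
  ultimately show "\<nu> = (\<lambda>u. 0)"
    using assms(4) mult_ideal_multalg_into[OF J_ideal] prime_multalg_left_annihilator \<nu>
    unfolding mult_prime_def by blast
qed

end
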